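(* Let $\mathcal{D}=(D,<,\approx)$ with $D$ infinite and $<$ a strict total order, and let $l,r\in\mathbb{N}$. An $(l,r)$-symbolic model $\rho$ admits a model (i.e. is realized by some model $\sigma$) if and only if its local projection $\rho_l$ is realized by some local model and its remote projection $\rho_r$ is realized by some remote model.
   Context: The variable set is $V=V_{\mathrm{local}}\uplus V_{\mathrm{remote}}$, with both parts finite and disjoint. A model is an infinite sequence of maps $V\to D$. A local model is an infinite sequence of maps $V_{\mathrm{local}}\to D$, and a remote model is an infinite sequence of maps $V_{\mathrm{remote}}\to D$. Constraints and their semantics: - $\sigma,n\models \mathbf{X}^i x\approx\mathbf{X}^j y$ iff $\sigma(n+i)(x)=\sigma(n+j)(y)$. - $\sigma,n\models \mathbf{X}^i x<\mathbf{X}^j y$ iff $\sigma(n+i)(x)<\sigma(n+j)(y)$. - $\sigma,n\models\mathbf{X}^i(x\approx\mathbf{XF}y)$ iff there is $k>n+i$ with $\sigma(n+i)(x)=\sigma(k)(y)$. The constraint sets are defined as follows. - $\Omega^l$ is the set of all constraints $\mathbf{X}^ix\approx\mathbf{X}^jy$ and $\mathbf{X}^ix<\mathbf{X}^jy$ with $x,y\in V_{\mathrm{local}}$ and $i,j\in\{0,\dots,l\}$. - $\Omega^r$ is the set of all constraints $\mathbf{X}^ix\approx\mathbf{X}^jy$ and $\mathbf{X}^i(x\approx\mathbf{XF}y)$ with $x,y\in V_{\mathrm{remote}}$ and $i,j\in\{0,\dots,r\}$. An $l$-frame is a set $\{c\in\Omega^l:\sigma_l,0\models c\}$ for some local model $\sigma_l$.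 An $r$-frame is a set $FR\subseteq\Omega^r$ satisfying the following conditions, for all remote variables and all indices in $\{0,\dots,r\}$. 1. $\mathbf{X}^ix\approx\mathbf{X}^ix\in FR$. 2. $\mathbf{X}^ix\approx\mathbf{X}^jy\in FR$ iff $\mathbf{X}^jy\approx\mathbf{X}^ix\in FR$. 3. If $\mathbf{X}^ix\approx\mathbf{X}^jy$ and $\mathbf{X}^jy\approx\mathbf{X}^{j'}z$ are in $FR$, then $\mathbf{X}^ix\approx\mathbf{X}^{j'}z\in FR$. 4. Suppose $\mathbf{X}^ix\approx\mathbf{X}^jy\in FR$. - If $i=j$, then for all $z$: $\mathbf{X}^i(x\approx\mathbf{XF}z)\in FR$ iff $\mathbf{X}^j(y\approx\mathbf{XF}z)\in FR$. - If $i<j$, then $\mathbf{X}^i(x\approx\mathbf{XF}y)\in FR$. Moreover, for all $z$: $\mathbf{X}^i(x\approx\mathbf{XF}z)\in FR$ iff either $\mathbf{X}^j(y\approx\mathbf{XF}z)\in FR$ or $\mathbf{X}^ix\approx\mathbf{X}^{j'}z\in FR$ for some $i<j'\le j$. An $(l,r)$-frame is a set $FR^l\cup FR^r$ with $FR^l$ an $l$-frame and $FR^r$ an $r$-frame. Its local projection is $FR\cap\Omega^l$ and its remote projection is $FR\cap\Omega^r$. One-step consistency is defined as follows. - A pair $(FR_1,FR_2)$ of $l$-frames is one-step consistent if, for all $x,y$ and all $0<i,j\le l$: $\mathbf{X}^ix\approx\mathbf{X}^jy\in FR_1$ iff $\mathbf{X}^{i-1}x\approx\mathbf{X}^{j-1}y\in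 FR_2$, and $\mathbf{X}^ix<\mathbf{X}^jy\in FR_1$ iff $\mathbf{X}^{i-1}x<\mathbf{X}^{j-1}y\in FR_2$. - A pair of $r$-frames is one-step consistent if, for all $x,y$ and all $0<i,j\le r$: $\mathbf{X}^ix\approx\mathbf{X}^jy\in FR_1$ iff $\mathbf{X}^{i-1}x\approx\mathbf{X}^{j-1}y\in FR_2$, and $\mathbf{X}^i(x\approx\mathbf{XF}y)\in FR_1$ iff $\mathbf{X}^{i-1}(x\approx\mathbf{XF}y)\in FR_2$. - A pair of $(l,r)$-frames is one-step consistent if both the pair of local projections and the pair of remote projections are one-step consistent. An $(l,r)$-symbolic model is an infinite sequence $\rho$ of $(l,r)$-frames such that $(\rho(i),\rho(i+1))$ is one-step consistent for every $i$. Its local projection is $\rho_l(i)=\rho(i)\cap\Omega^l$ and its remote projection is $\rho_r(i)=\rho(i)\cap\Omega^r$. Realization is defined as follows. - A model $\sigma$ realizes $\rho$ iff $\rho(i)=\{c\in\Omega^l\cup\Omega^r:\sigma,i\models c\}$ for all $i$. - A local model $\sigma_l$ realizes $\rho_l$ iff $\rho_l(i)=\{c\in\Omega^l:\sigma_l,i\models c\}$ for all $i$. - A remote model $\sigma_r$ realizes $\rho_r$ iff $\rho_r(i)=\{c\in\Omega^r:\sigma_r,i\models c\}$ for all $i$. *)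

theory Defs
  imports Main
begin

text \<open>Constraints: Eq i x j y is X^i x ~ X^j y; Lt i x j y is X^i x < X^j y;
  EqF i x y is X^i (x ~ XF y).\<close>
datatype 'v constr = Eq nat 'v nat 'v | Lt nat 'v nat 'v | EqF nat 'v 'v

text \<open>Models are infinite sequences of valuations; only values on the relevant
  variable set are ever inspected.\<close>
type_synonym ('v,'d) model = "nat \<Rightarrow> 'v \<Rightarrow> 'd"

fun sat :: "('v,'d::linorder) model \<Rightarrow> nat \<Rightarrow> 'v constr \<Rightarrow> bool" where
  "sat \<sigma> n (Eq i x j y) = (\<sigma> (n+i) x = \<sigma> (n+j) y)"
| "sat \<sigma> n (Lt i x j y) = (\<sigma> (n+i) x < \<sigma> (n+j) y)"
| "sat \<sigma> n (EqF i x y) = (\<exists>k>n+i. \<sigma> (n+i) x = \<sigma> k y)"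

definition Omega_l :: "'v set \<Rightarrow> nat \<Rightarrow> 'v constr set" where
  "Omega_l L l = {Eq i x j y | i x j y. x \<in> L \<and> y \<in> L \<and> i \<le> l \<and> j \<le> l}
               \<union> {Lt i x j y | i x j y. x \<in> L \<and> y \<in> L \<and> i \<le> l \<and> j \<le> l}"

definition Omega_r :: "'v set \<Rightarrow> nat \<Rightarrow> 'v constr set" where
  "Omega_r R r = {Eq i x j y | i x j y. x \<in> R \<and> y \<in> R \<and> i \<le> r \<and> j \<le> r}
               \<union> {EqF i x y | i x y. x \<in> R \<and> y \<in> R \<and> i \<le> r}"

definition l_frame :: "'v set \<Rightarrow> nat \<Rightarrow> 'v constr set \<Rightarrow> ('d::linorder) itself \<Rightarrow> bool" where
  "l_frame L l FR _ \<longleftrightarrow> (\<exists>\<sigma>l :: ('v,'d) model. FR = {c \<in> Omega_l L l. sat \<sigma>l 0 c})"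

definition r_frame :: "'v set \<Rightarrow> nat \<Rightarrow> 'v constr set \<Rightarrow> bool" where
  "r_frame R r FR \<longleftrightarrow> FR \<subseteq> Omega_r R r \<and>
    (\<forall>x\<in>R. \<forall>i\<le>r. Eq i x i x \<in> FR) \<and>
    (\<forall>x\<in>R. \<forall>y\<in>R. \<forall>i\<le>r. \<forall>j\<le>r. Eq i x j y \<in> FR \<longleftrightarrow> Eq j y i x \<in> FR) \<and>
    (\<forall>x\<in>R. \<forall>y\<in>R. \<forall>z\<in>R. \<forall>i\<le>r. \<forall>j\<le>r. \<forall>j'\<le>r.
        Eq i x j y \<in> FR \<and> Eq j y j' z \<in> FR \<longrightarrow> Eq i x j' z \<in> FR) \<and>
    (\<forall>x\<in>R. \<forall>y\<in>R. \<forall>i\<le>r. \<forall>j\<le>r. Eq i x j y \<in> FR \<longrightarrow>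
        (i = j \<longrightarrow> (\<forall>z\<in>R. EqF i x z \<in> FR \<longleftrightarrow> EqF j y z \<in> FR)) \<and>
        (i < j \<longrightarrow> EqF i x y \<in> FR \<and>
           (\<forall>z\<in>R. EqF i x z \<in> FR \<longleftrightarrow>
              (EqF j y z \<in> FR \<or> (\<exists>j'. i < j' \<and> j' \<le> j \<and> Eq i x j' z \<in> FR)))))"

definition lr_frame :: "'v set \<Rightarrow> 'v set \<Rightarrow> nat \<Rightarrow> nat \<Rightarrow> 'v constr set \<Rightarrow> ('d::linorder) itself \<Rightarrow> bool" where
  "lr_frame L R l r FR d \<longleftrightarrow>
     (\<exists>FRl FRr. FR = FRl \<union> FRr \<and> l_frame L l FRl d \<and> r_frame R r FRr)"

definition osc_l :: "'v set \<Rightarrow> nat \<Rightarrow> 'v constr set \<Rightarrow> 'v constr set \<Rightarrow> bool" where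
  "osc_l L l FR1 FR2 \<longleftrightarrow> (\<forall>x\<in>L. \<forall>y\<in>L. \<forall>i j. 0 < i \<and> i \<le> l \<and> 0 < j \<and> j \<le> l \<longrightarrow>
     (Eq i x j y \<in> FR1 \<longleftrightarrow> Eq (i-1) x (j-1) y \<in> FR2) \<and>
     (Lt i x j y \<in> FR1 \<longleftrightarrow> Lt (i-1) x (j-1) y \<in> FR2))"

definition osc_r :: "'v set \<Rightarrow> nat \<Rightarrow> 'v constr set \<Rightarrow> 'v constr set \<Rightarrow> bool" where
  "osc_r R r FR1 FR2 \<longleftrightarrow> (\<forall>x\<in>R. \<forall>y\<in>R. \<forall>i j. 0 < i \<and> i \<le> r \<and> 0 < j \<and> j \<le> r \<longrightarrow>
     (Eq i x j y \<in> FR1 \<longleftrightarrow> Eq (i-1) x (j-1) y \<in> FR2) \<and>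
     (EqF i x y \<in> FR1 \<longleftrightarrow> EqF (i-1) x y \<in> FR2))"

definition osc_lr :: "'v set \<Rightarrow> 'v set \<Rightarrow> nat \<Rightarrow> nat \<Rightarrow> 'v constr set \<Rightarrow> 'v constr set \<Rightarrow> bool" where
  "osc_lr L R l r FR1 FR2 \<longleftrightarrow>
     osc_l L l (FR1 \<inter> Omega_l L l) (FR2 \<inter> Omega_l L l) \<and>
     osc_r R r (FR1 \<inter> Omega_r R r) (FR2 \<inter> Omega_r R r)"

definition symbolic_model :: "'v set \<Rightarrow> 'v set \<Rightarrow> nat \<Rightarrow> nat \<Rightarrow> (nat \<Rightarrow> 'v constr set) \<Rightarrow> ('d::linorder) itself \<Rightarrow> bool" where
  "symbolic_model L R l r \<rho> d \<longleftrightarrow>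
     (\<forall>i. lr_frame L R l r (\<rho> i) d) \<and> (\<forall>i. osc_lr L R l r (\<rho> i) (\<rho> (Suc i)))"

definition realizes :: "'v set \<Rightarrow> 'v set \<Rightarrow> nat \<Rightarrow> nat \<Rightarrow> ('v,'d::linorder) model \<Rightarrow> (nat \<Rightarrow> 'v constr set) \<Rightarrow> bool" where
  "realizes L R l r \<sigma> \<rho> \<longleftrightarrow> (\<forall>i. \<rho> i = {c \<in> Omega_l L l \<union> Omega_r R r. sat \<sigma> i c})"

definition realizes_l :: "'v set \<Rightarrow> nat \<Rightarrow> ('v,'d::linorder) model \<Rightarrow> (nat \<Rightarrow> 'v constr set) \<Rightarrow> bool" where
  "realizes_l L l \<sigma>l \<rho>l \<longleftrightarrow> (\<forall>i. \<rho>l i = {c \<in> Omega_l L l. sat \<sigma>l i c})"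

definition realizes_r :: "'v set \<Rightarrow> nat \<Rightarrow> ('v,'d::linorder) model \<Rightarrow> (nat \<Rightarrow> 'v constr set) \<Rightarrow> bool" where
  "realizes_r R r \<sigma>r \<rho>r \<longleftrightarrow> (\<forall>i. \<rho>r i = {c \<in> Omega_r R r. sat \<sigma>r i c})"

end

theory Submission
  imports Defs
begin

text \<open>Every constraint of \<open>Omega_l\<close> mentions only local variables and every constraint of
  \<open>Omega_r\<close> only remote ones, so satisfaction of a constraint depends only on the values of the
  variables of its own part. Since the two parts are disjoint, a local and a remote model can be
  glued into one model that agrees with each of them on its part; it satisfies exactly the local
  constraints of the first and the remote constraints of the second.\<close>

lemma sat_Omega_l_cong:
  assumes "c \<in> Omega_l L l" and "\<And>n x. x \<in> L \<Longrightarrow> \<sigma> n x = \<sigma>' n x"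
  shows "sat \<sigma> m c = sat \<sigma>' m c"
  using assms(1) unfolding Omega_l_def by (auto simp: assms(2))

lemma sat_Omega_r_cong:
  assumes "c \<in> Omega_r R r" and "\<And>n x. x \<in> R \<Longrightarrow> \<sigma> n x = \<sigma>' n x"
  shows "sat \<sigma> m c = sat \<sigma>' m c"
  using assms(1) unfolding Omega_r_def by (auto simp: assms(2))

lemma realizes_l_cong:
  assumes "\<And>n x. x \<in> L \<Longrightarrow> \<sigma> n x = \<sigma>' n x"
  shows "realizes_l L l \<sigma> \<rho>l \<longleftrightarrow> realizes_l L l \<sigma>' \<rho>l"
proof -
  have "{c \<in> Omega_l L l. sat \<sigma> i c} = {c \<in> Omega_l L l. sat \<sigma>' i c}" for i
    using sat_Omega_l_cong[of _ L l \<sigma> \<sigma>', OF _ assms] by blast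
  then show ?thesis unfolding realizes_l_def by simp
qed

lemma realizes_r_cong:
  assumes "\<And>n x. x \<in> R \<Longrightarrow> \<sigma> n x = \<sigma>' n x"
  shows "realizes_r R r \<sigma> \<rho>r \<longleftrightarrow> realizes_r R r \<sigma>' \<rho>r"
proof -
  have "{c \<in> Omega_r R r. sat \<sigma> i c} = {c \<in> Omega_r R r. sat \<sigma>' i c}" for i
    using sat_Omega_r_cong[of _ R r \<sigma> \<sigma>', OF _ assms] by blast
  then show ?thesis unfolding realizes_r_def by simp
qed

lemma symbolic_model_subset_Omega:
  assumes "symbolic_model L R l r \<rho> TYPE('d::linorder)"
  shows "\<rho> i \<subseteq> Omega_l L l \<union> Omega_r R r"
proof -
  from assms obtain FRl FRr where "\<rho> i = FRl \<union> FRr" "l_frame L l FRl TYPE('d)" "r_frame R r FRr"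
    unfolding symbolic_model_def lr_frame_def by blast
  then show ?thesis unfolding l_frame_def r_frame_def by auto
qed

lemma realizes_iff_projections:
  assumes "\<And>i. \<rho> i \<subseteq> Omega_l L l \<union> Omega_r R r"
  shows "realizes L R l r \<sigma> \<rho> \<longleftrightarrow>
         realizes_l L l \<sigma> (\<lambda>i. \<rho> i \<inter> Omega_l L l) \<and> realizes_r R r \<sigma> (\<lambda>i. \<rho> i \<inter> Omega_r R r)"
  unfolding realizes_def realizes_l_def realizes_r_def using assms by blast

definition glue_models :: "'v set \<Rightarrow> ('v,'d) model \<Rightarrow> ('v,'d) model \<Rightarrow> ('v,'d) model" where
  "glue_models L \<sigma>l \<sigma>r = (\<lambda>n x. if x \<in> L then \<sigma>l n x else \<sigma>r n x)"

lemma glue_models_local: "x \<in> L \<Longrightarrow> glue_models L \<sigma>l \<sigma>r n x = \<sigma>l n x"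
  by (simp add: glue_models_def)

lemma glue_models_remote: "L \<inter> R = {} \<Longrightarrow> x \<in> R \<Longrightarrow> glue_models L \<sigma>l \<sigma>r n x = \<sigma>r n x"
  by (auto simp: glue_models_def)

theorem lemma2p1p1:
  fixes L R :: "'v set" and l r :: nat and \<rho> :: "nat \<Rightarrow> 'v constr set"
  assumes "finite L" and "finite R" and "L \<inter> R = {}"
    and "infinite (UNIV :: 'd::linorder set)"
    and "symbolic_model L R l r \<rho> TYPE('d)"
  shows "(\<exists>\<sigma> :: ('v,'d) model. realizes L R l r \<sigma> \<rho>) \<longleftrightarrow>
         (\<exists>\<sigma>l :: ('v,'d) model. realizes_l L l \<sigma>l (\<lambda>i. \<rho> i \<inter> Omega_l L l)) \<and>
         (\<exists>\<sigma>r :: ('v,'d) model. realizes_r R r \<sigma>r (\<lambda>i. \<rho> i \<inter> Omega_r R r))"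
proof -
  have "\<And>i. \<rho> i \<subseteq> Omega_l L l \<union> Omega_r R r"
    by (rule symbolic_model_subset_Omega[OF assms(5)])
  note realizes_iff = realizes_iff_projections[OF this]
  have glued:
    "realizes L R l r (glue_models L \<sigma>l \<sigma>r) \<rho>"
    if "realizes_l L l \<sigma>l (\<lambda>i. \<rho> i \<inter> Omega_l L l)"
      and "realizes_r R r \<sigma>r (\<lambda>i. \<rho> i \<inter> Omega_r R r)"
    for \<sigma>l \<sigma>r :: "('v,'d) model"
    using that realizes_l_cong[of L "glue_models L \<sigma>l \<sigma>r" \<sigma>l, OF glue_models_local]
      realizes_r_cong[of R "glue_models L \<sigma>l \<sigma>r" \<sigma>r, OF glue_models_remote[OF assms(3)]]
    by (simp add: realizes_iff)
  show ?thesis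
    using glued by (auto simp: realizes_iff)
qed

end
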